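(* Fix $\alpha,\beta>0$. For $n\ge2$ let $S$ be a random $\alpha/\beta$-staircase tableau of size $n$ with law $\mathbb{P}_{n,\alpha,\beta}$, and let $X_n$ be the number of non-empty boxes among the boxes $(n-j,j)$, $1\le j\le n-1$ (the second main diagonal). Then, as $n\to\infty$, $X_n$ converges in distribution to a Poisson random variable with parameter $1$.
   Context: A staircase tableau of size $n$ has boxes $(i,j)$ with $i,j\ge1$ and $i+j\le n+1$, rows numbered from the top and columns from the left. An $\alpha/\beta$-staircase tableau of size $n$ is a filling in which each box is empty or contains $\alpha$ or $\beta$, such that: all boxes in the same column and above an $\alpha$ are empty; all boxes in the same row and to the left of a $\beta$ are empty; every main-diagonal box (with $i+j=n+1$) contains a symbol. $\overline{\mathcal{S}}_n$ is the set of these. The weight is $wt(S)=\alpha^{N_\alpha}\beta^{N_\beta}$ ($N_\alpha,N_\beta$ the numbers of $\alpha$'s, $\beta$'s), and $\mathbb{P}_{n,\alpha,\beta}(S)=wt(S)/\sum_{T\in\overline{\mathcal{S}}_n}wt(T)$. *)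

theory Defs
  imports "HOL-Probability.Probability"
begin

datatype sym = Alpha | Beta

text \<open>Boxes of the staircase of size n: (i,j) with i,j >= 1 and i+j <= n+1
  (i = row from the top, j = column from the left).\<close>
definition boxes :: "nat \<Rightarrow> (nat \<times> nat) set" where
  "boxes n = {(i, j). 1 \<le> i \<and> 1 \<le> j \<and> i + j \<le> n + 1}"

definition staircase :: "nat \<Rightarrow> (nat \<times> nat \<Rightarrow> sym option) set" where
  "staircase n = {S.
     (\<forall>p. p \<notin> boxes n \<longrightarrow> S p = None) \<and>
     (\<forall>i j i'. S (i, j) = Some Alpha \<and> 1 \<le> i' \<and> i' < i \<longrightarrow> S (i', j) = None) \<and>
     (\<forall>i j j'. S (i, j) = Some Beta \<and> 1 \<le> j' \<and> j' < j \<longrightarrow> S (i, j') = None) \<and>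
     (\<forall>i j. (i, j) \<in> boxes n \<and> i + j = n + 1 \<longrightarrow> S (i, j) \<noteq> None)}"

definition N_alpha :: "(nat \<times> nat \<Rightarrow> sym option) \<Rightarrow> nat" where
  "N_alpha S = card {p. S p = Some Alpha}"

definition N_beta :: "(nat \<times> nat \<Rightarrow> sym option) \<Rightarrow> nat" where
  "N_beta S = card {p. S p = Some Beta}"

definition wt :: "real \<Rightarrow> real \<Rightarrow> (nat \<times> nat \<Rightarrow> sym option) \<Rightarrow> real" where
  "wt a b S = a ^ N_alpha S * b ^ N_beta S"

definition staircase_pmf :: "nat \<Rightarrow> real \<Rightarrow> real \<Rightarrow> (nat \<times> nat \<Rightarrow> sym option) pmf" where
  "staircase_pmf n a b = embed_pmf (\<lambda>S. if S \<in> staircase n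
      then wt a b S / (\<Sum>T\<in>staircase n. wt a b T) else 0)"

definition X :: "nat \<Rightarrow> (nat \<times> nat \<Rightarrow> sym option) \<Rightarrow> nat" where
  "X n S = card {j \<in> {1..n-1}. S (n - j, j) \<noteq> None}"

definition X_law :: "nat \<Rightarrow> real \<Rightarrow> real \<Rightarrow> real measure" where
  "X_law n a b = distr (measure_pmf (staircase_pmf n a b)) borel (\<lambda>S. real (X n S))"

end

theory Submission
  imports Defs "HOL-Real_Asymp.Real_Asymp"
begin

text \<open>A tableau of size \<open>n + 1\<close> is its first column followed by a tableau of size \<open>n\<close>; the
  possible first columns depend only on the rows without a \<open>\<beta>\<close>, and tracking the number of
  such rows gives the partition function \<open>Z n = (\<Prod>k<n. \<alpha> + \<beta> + k\<alpha>\<beta>)\<close>.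
  A filled box \<open>(r, c)\<close> of the second diagonal forces a \<open>\<beta>\<close> at \<open>(r + 1, c)\<close> and an \<open>\<alpha>\<close> at
  \<open>(r, c + 1)\<close>, alone in their row and column; deleting that row and column is a bijection of
  weight \<open>\<alpha>\<beta>\<close> onto tableaux of size \<open>n - 1\<close>. Hence adjacent boxes of the second diagonal are
  never both filled, and the tableaux filling a set \<open>J\<close> of pairwise non-adjacent boxes have total
  weight \<open>(\<alpha>\<beta>)^|J| Z (n - |J|)\<close>. So the binomial moment \<open>E (X n choose m)\<close> is
  \<open>((n - m) choose m) (\<alpha>\<beta>)^m Z (n - m) / Z n\<close>, which is at most \<open>1/m!\<close> and tends to \<open>1/m!\<close>,
  the binomial moment of \<open>Poisson(1)\<close>. Inclusion--exclusion and Tannery's theorem then give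
  \<open>P (X n = k) \<longrightarrow> exp (-1) / k!\<close>.\<close>

type_synonym tableau = "nat \<times> nat \<Rightarrow> sym option"

lemma finite_UNIV_sym_option: "finite (UNIV :: sym option set)"
proof -
  have UNIV_eq: "(UNIV :: sym option set) = {None, Some Alpha, Some Beta}"
    by (auto intro: sym.exhaust)
  show ?thesis unfolding UNIV_eq by simp
qed

lemma finite_option_functions_with_support:
  "finite A \<Longrightarrow> finite {f :: 'a \<Rightarrow> sym option. \<forall>x. x \<notin> A \<longrightarrow> f x = None}"
  using finite_set_of_finite_funs[OF _ finite_UNIV_sym_option, of A None] by simp

lemma finite_boxes: "finite (boxes n)"
  by (rule finite_subset[of _ "{1..n+1} \<times> {1..n+1}"]) (auto simp: boxes_def)

lemma finite_staircase: "finite (staircase n)"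
  by (rule finite_subset[OF _ finite_option_functions_with_support[OF finite_boxes[of n]]])
    (auto simp: staircase_def)

lemma staircase_outside: "T \<in> staircase n \<Longrightarrow> p \<notin> boxes n \<Longrightarrow> T p = None"
  unfolding staircase_def by blast

lemma staircase_above_alpha:
  "T \<in> staircase n \<Longrightarrow> T (i, j) = Some Alpha \<Longrightarrow> 1 \<le> i' \<Longrightarrow> i' < i \<Longrightarrow> T (i', j) = None"
  unfolding staircase_def by blast

lemma staircase_left_of_beta:
  "T \<in> staircase n \<Longrightarrow> T (i, j) = Some Beta \<Longrightarrow> 1 \<le> j' \<Longrightarrow> j' < j \<Longrightarrow> T (i, j') = None"
  unfolding staircase_def by blast

lemma staircase_diagonal:
  "T \<in> staircase n \<Longrightarrow> (i, j) \<in> boxes n \<Longrightarrow> i + j = n + 1 \<Longrightarrow> T (i, j) \<noteq> None"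
  unfolding staircase_def by blast

lemma staircase_column_0: "T \<in> staircase n \<Longrightarrow> T (i, 0) = None"
  by (rule staircase_outside) (auto simp: boxes_def)

lemma staircaseI:
  assumes "\<And>p. p \<notin> boxes n \<Longrightarrow> T p = None"
    and "\<And>i j i'. T (i, j) = Some Alpha \<Longrightarrow> 1 \<le> i' \<Longrightarrow> i' < i \<Longrightarrow> T (i', j) = None"
    and "\<And>i j j'. T (i, j) = Some Beta \<Longrightarrow> 1 \<le> j' \<Longrightarrow> j' < j \<Longrightarrow> T (i, j') = None"
    and "\<And>i j. (i, j) \<in> boxes n \<Longrightarrow> i + j = n + 1 \<Longrightarrow> T (i, j) \<noteq> None"
  shows "T \<in> staircase n"
  using assms unfolding staircase_def by blast

lemma staircase_0: "staircase 0 = {\<lambda>p. None}"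
proof -
  have "boxes 0 = {}" by (auto simp: boxes_def)
  then show ?thesis by (auto intro!: staircaseI dest: staircase_outside)
qed

lemma finite_support_staircase: "T \<in> staircase n \<Longrightarrow> finite {p. T p = Some s}"
  by (rule finite_subset[OF _ finite_boxes[of n]]) (auto dest: staircase_outside)

section \<open>Removing the first column\<close>

definition add_column :: "(nat \<Rightarrow> sym option) \<Rightarrow> tableau \<Rightarrow> tableau" where
  "add_column c T = (\<lambda>(i, j). if j = 0 then None else if j = 1 then c i else T (i, j - 1))"

definition drop_column :: "tableau \<Rightarrow> tableau" where
  "drop_column T = (\<lambda>(i, j). if j = 0 then None else T (i, Suc j))"

definition first_column :: "tableau \<Rightarrow> nat \<Rightarrow> sym option" where
  "first_column T i = T (i, 1)"

definition beta_free_rows :: "nat \<Rightarrow> tableau \<Rightarrow> nat set" where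
  "beta_free_rows n T = {i \<in> {1..n}. \<forall>j. T (i, j) \<noteq> Some Beta}"

text \<open>A first column may be filled only in its diagonal box \<open>m\<close> and in the rows \<open>F\<close> that have no
  \<open>\<beta>\<close> further right.\<close>
definition admissible_columns :: "nat \<Rightarrow> nat set \<Rightarrow> (nat \<Rightarrow> sym option) set" where
  "admissible_columns m F = {c. (\<forall>i. i \<notin> insert m F \<longrightarrow> c i = None) \<and> c m \<noteq> None \<and>
      (\<forall>i i'. c i = Some Alpha \<and> i' < i \<longrightarrow> c i' = None)}"

lemma finite_admissible_columns: "finite F \<Longrightarrow> finite (admissible_columns m F)"
  by (rule finite_subset[OF _ finite_option_functions_with_support[of "insert m F"]])
    (auto simp: admissible_columns_def)

lemma finite_beta_free_rows: "finite (beta_free_rows n T)"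
  by (rule finite_subset[of _ "{1..n}"]) (auto simp: beta_free_rows_def)

lemma add_column_left_of_beta:
  assumes T: "T \<in> staircase n" and c: "c \<in> admissible_columns (Suc n) (beta_free_rows n T)"
    and a: "add_column c T (i, j) = Some Beta" "1 \<le> j'" "j' < j"
  shows "add_column c T (i, j') = None"
proof -
  have "j \<ge> 2" using a c by (auto simp: add_column_def admissible_columns_def split: if_splits)
  then have beta: "T (i, j - 1) = Some Beta" using a by (simp add: add_column_def)
  show ?thesis
  proof (cases "j' = 1")
    case True
    have "i \<noteq> Suc n"
      using staircase_outside[OF T, of "(i, j - 1)"] beta \<open>j \<ge> 2\<close> by (auto simp: boxes_def)
    moreover have "i \<notin> beta_free_rows n T" using beta by (auto simp: beta_free_rows_def)
    ultimately show ?thesis using c True by (simp add: add_column_def admissible_columns_def)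
  next
    case False
    then show ?thesis
      using a staircase_left_of_beta[OF T beta, of "j' - 1"] by (simp add: add_column_def)
  qed
qed

lemma add_column_in_staircase:
  assumes T: "T \<in> staircase n" and c: "c \<in> admissible_columns (Suc n) (beta_free_rows n T)"
  shows "add_column c T \<in> staircase (Suc n)"
proof (rule staircaseI)
  fix p assume p: "p \<notin> boxes (Suc n)"
  obtain i j where [simp]: "p = (i, j)" by (cases p)
  show "add_column c T p = None"
  proof (cases "j = 1")
    case True
    then have "i \<notin> insert (Suc n) (beta_free_rows n T)"
      using p by (auto simp: boxes_def beta_free_rows_def)
    then show ?thesis using c True by (simp add: add_column_def admissible_columns_def)
  next
    case False
    then have "j = 0 \<or> (i, j - 1) \<notin> boxes n" using p by (auto simp: boxes_def)
    then show ?thesis using staircase_outside[OF T] False by (auto simp: add_column_def)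
  qed
next
  fix i j i' assume a: "add_column c T (i, j) = Some Alpha" "1 \<le> i'" "i' < i"
  then have "j \<noteq> 0" by (auto simp: add_column_def split: if_splits)
  with a show "add_column c T (i', j) = None"
    using c staircase_above_alpha[OF T, of i "j - 1" i']
    by (auto simp: add_column_def admissible_columns_def split: if_splits)
next
  fix i j j' assume "add_column c T (i, j) = Some Beta" "1 \<le> j'" "j' < j"
  then show "add_column c T (i, j') = None" by (rule add_column_left_of_beta[OF T c])
next
  fix i j assume a: "(i, j) \<in> boxes (Suc n)" "i + j = Suc n + 1"
  show "add_column c T (i, j) \<noteq> None"
  proof (cases "j = 1")
    case True
    then show ?thesis using c a by (simp add: add_column_def admissible_columns_def)
  next
    case False
    then have "T (i, j - 1) \<noteq> None" using a by (intro staircase_diagonal[OF T]) (auto simp: boxes_def)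
    then show ?thesis using False a by (auto simp: add_column_def boxes_def)
  qed
qed

lemma drop_column_in_staircase:
  assumes T: "T \<in> staircase (Suc n)"
  shows "drop_column T \<in> staircase n"
proof (rule staircaseI)
  fix p assume "p \<notin> boxes n"
  moreover obtain i j where p: "p = (i, j)" by (cases p)
  ultimately have "j = 0 \<or> (i, Suc j) \<notin> boxes (Suc n)" by (auto simp: boxes_def)
  then show "drop_column T p = None" using staircase_outside[OF T] p by (auto simp: drop_column_def)
next
  fix i j i' assume "drop_column T (i, j) = Some Alpha" "1 \<le> i'" "i' < i"
  then show "drop_column T (i', j) = None"
    using staircase_above_alpha[OF T] by (auto simp: drop_column_def split: if_splits)
next
  fix i j j' assume "drop_column T (i, j) = Some Beta" "1 \<le> j'" "j' < j"
  then show "drop_column T (i, j') = None"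
    using staircase_left_of_beta[OF T, of i "Suc j" "Suc j'"]
    by (auto simp: drop_column_def split: if_splits)
next
  fix i j assume "(i, j) \<in> boxes n" "i + j = n + 1"
  then show "drop_column T (i, j) \<noteq> None"
    using staircase_diagonal[OF T, of i "Suc j"] by (auto simp: drop_column_def boxes_def)
qed

lemma first_column_admissible:
  assumes T: "T \<in> staircase (Suc n)"
  shows "first_column T \<in> admissible_columns (Suc n) (beta_free_rows n (drop_column T))"
  unfolding admissible_columns_def
proof (intro CollectI conjI allI impI)
  fix i assume i: "i \<notin> insert (Suc n) (beta_free_rows n (drop_column T))"
  show "first_column T i = None"
  proof (cases "i \<in> {1..n}")
    case True
    then obtain j where "drop_column T (i, j) = Some Beta" using i by (auto simp: beta_free_rows_def)
    then have "T (i, Suc j) = Some Beta" "j \<noteq> 0" by (auto simp: drop_column_def split: if_splits)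
    then show ?thesis using staircase_left_of_beta[OF T, of i "Suc j" 1] by (simp add: first_column_def)
  next
    case False
    then show ?thesis using i staircase_outside[OF T, of "(i, 1)"] by (auto simp: first_column_def boxes_def)
  qed
next
  show "first_column T (Suc n) \<noteq> None"
    using staircase_diagonal[OF T, of "Suc n" 1] by (simp add: first_column_def boxes_def)
next
  fix i i' assume "first_column T i = Some Alpha \<and> i' < i"
  then show "first_column T i' = None"
    using staircase_above_alpha[OF T, of i 1 i'] staircase_outside[OF T, of "(0, 1)"]
    by (cases "i' = 0") (auto simp: first_column_def boxes_def)
qed

lemma add_column_drop_column: "T \<in> staircase n \<Longrightarrow> add_column (first_column T) (drop_column T) = T"
  by (rule ext) (auto simp: add_column_def drop_column_def first_column_def staircase_column_0)

lemma drop_column_add_column: "T \<in> staircase n \<Longrightarrow> drop_column (add_column c T) = T"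
  by (rule ext) (auto simp: add_column_def drop_column_def staircase_column_0)

lemma first_column_add_column: "first_column (add_column c T) = c"
  by (rule ext) (simp add: add_column_def first_column_def)

lemma sum_staircase_Suc:
  "(\<Sum>T\<in>staircase (Suc n). f T) =
   (\<Sum>T\<in>staircase n. \<Sum>c\<in>admissible_columns (Suc n) (beta_free_rows n T). f (add_column c T))"
proof -
  let ?P = "Sigma (staircase n) (\<lambda>T. admissible_columns (Suc n) (beta_free_rows n T))"
  have "(\<Sum>T\<in>staircase (Suc n). f T) = (\<Sum>(T, c)\<in>?P. f (add_column c T))"
    by (rule sum.reindex_bij_witness[where i = "\<lambda>(T, c). add_column c T"
          and j = "\<lambda>T. (drop_column T, first_column T)"])
      (auto simp: add_column_drop_column drop_column_in_staircase first_column_admissible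
        drop_column_add_column first_column_add_column add_column_in_staircase)
  also have "\<dots> = (\<Sum>T\<in>staircase n. \<Sum>c\<in>admissible_columns (Suc n) (beta_free_rows n T). f (add_column c T))"
    by (rule sum.Sigma[symmetric]) (auto simp: finite_staircase finite_admissible_columns finite_beta_free_rows)
  finally show ?thesis .
qed

section \<open>The partition function\<close>

lemma sum_prod_fun_upd_image:
  fixes h :: "'b \<Rightarrow> 'c::comm_semiring_1"
  assumes S: "finite S" "x \<notin> S" and A: "\<forall>c\<in>A. c x = d"
  shows "(\<Sum>c\<in>(\<lambda>c. c(x := v)) ` A. \<Prod>i\<in>insert x S. h (c i)) = h v * (\<Sum>c\<in>A. \<Prod>i\<in>S. h (c i))"
proof -
  have "inj_on (\<lambda>c. c(x := v)) A"
    by (rule inj_onI) (metis A fun_upd_triv fun_upd_upd)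
  moreover have "(\<Prod>i\<in>S. h ((c(x := v)) i)) = (\<Prod>i\<in>S. h (c i))" for c
    using S(2) by (intro prod.cong) auto
  ultimately show ?thesis using S by (simp add: sum.reindex sum_distrib_left)
qed

lemma sum_prod_insert_const:
  fixes h :: "'b \<Rightarrow> 'c::comm_semiring_1"
  assumes "finite S" "x \<notin> S" "\<forall>c\<in>A. c x = d"
  shows "(\<Sum>c\<in>A. \<Prod>i\<in>insert x S. h (c i)) = h d * (\<Sum>c\<in>A. \<Prod>i\<in>S. h (c i))"
proof -
  have "(\<lambda>c. c(x := d)) ` A = A"
    using assms(3) by (force simp: image_iff fun_upd_idem)
  then show ?thesis using sum_prod_fun_upd_image[OF assms, of _ d] by simp
qed

lemma disjoint_by_value:
  "\<forall>c\<in>A. c x \<in> U \<Longrightarrow> \<forall>c\<in>B. c x \<in> V \<Longrightarrow> U \<inter> V = {} \<Longrightarrow> A \<inter> B = {}"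
  by blast

lemma sym_not_Alpha_iff: "s \<noteq> Alpha \<longleftrightarrow> s = Beta"
  by (cases s) auto

text \<open>The variable \<open>y\<close> marks the rows that stay free of \<open>\<beta>\<close>'s.\<close>
definition cell_weight :: "real \<Rightarrow> real \<Rightarrow> real \<Rightarrow> sym option \<Rightarrow> real" where
  "cell_weight a b y v = (case v of None \<Rightarrow> y | Some Alpha \<Rightarrow> a * y | Some Beta \<Rightarrow> b)"

lemma cell_weight_simps [simp]:
  "cell_weight a b y None = y" "cell_weight a b y (Some Alpha) = a * y" "cell_weight a b y (Some Beta) = b"
  by (simp_all add: cell_weight_def)

definition alpha_free_columns :: "nat \<Rightarrow> nat set \<Rightarrow> (nat \<Rightarrow> sym option) set" where
  "alpha_free_columns m F = {c. (\<forall>i. i \<notin> insert m F \<longrightarrow> c i = None) \<and> c m = Some Beta \<and>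
      (\<forall>i\<in>F. c i \<noteq> Some Alpha)}"

lemma finite_alpha_free_columns: "finite F \<Longrightarrow> finite (alpha_free_columns m F)"
  by (rule finite_subset[OF _ finite_option_functions_with_support[of "insert m F"]])
    (auto simp: alpha_free_columns_def)

lemma alpha_free_columns_insert:
  assumes "x \<notin> insert m F"
  shows "alpha_free_columns m (insert x F) =
    alpha_free_columns m F \<union> (\<lambda>c. c(x := Some Beta)) ` alpha_free_columns m F"
proof (intro equalityI subsetI)
  fix c assume c: "c \<in> alpha_free_columns m (insert x F)"
  show "c \<in> alpha_free_columns m F \<union> (\<lambda>c. c(x := Some Beta)) ` alpha_free_columns m F"
  proof (cases "c x = None")
    case True
    then show ?thesis using c by (auto simp: alpha_free_columns_def)
  next
    case False
    then have "c x = Some Beta" using c by (auto simp: alpha_free_columns_def sym_not_Alpha_iff)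
    then have "c = (c(x := None))(x := Some Beta)" by auto
    moreover have "c(x := None) \<in> alpha_free_columns m F" using c assms by (auto simp: alpha_free_columns_def)
    ultimately show ?thesis by blast
  qed
qed (use assms in \<open>auto simp: alpha_free_columns_def split: if_splits\<close>)

lemma sum_alpha_free_columns:
  assumes "finite F" "m \<notin> F"
  shows "(\<Sum>c\<in>alpha_free_columns m F. \<Prod>i\<in>insert m F. cell_weight a b y (c i)) = b * (y + b) ^ card F"
  using assms
proof (induction F rule: finite_induct)
  case empty
  have "alpha_free_columns m {} = {(\<lambda>i. None)(m := Some Beta)}"
    by (auto simp: alpha_free_columns_def)
  then show ?case by simp
next
  case (insert x F)
  let ?A = "alpha_free_columns m F"
  have x: "x \<notin> insert m F" "finite (insert m F)" using insert by auto
  have None: "\<forall>c\<in>?A. c x = None" using x by (auto simp: alpha_free_columns_def)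
  have disj: "?A \<inter> (\<lambda>c. c(x := Some Beta)) ` ?A = {}"
    by (rule disjoint_by_value[where x = x and U = "{None}" and V = "{Some Beta}"]) (use None in auto)
  let ?w = "cell_weight a b y"
  have "(\<Sum>c\<in>alpha_free_columns m (insert x F). \<Prod>i\<in>insert x (insert m F). ?w (c i))
      = (\<Sum>c\<in>?A. \<Prod>i\<in>insert x (insert m F). ?w (c i))
      + (\<Sum>c\<in>(\<lambda>c. c(x := Some Beta)) ` ?A. \<Prod>i\<in>insert x (insert m F). ?w (c i))"
    unfolding alpha_free_columns_insert[OF x(1)]
    by (intro sum.union_disjoint) (simp_all add: finite_alpha_free_columns insert.hyps disj)
  also have "\<dots> = y * (b * (y + b) ^ card F) + b * (b * (y + b) ^ card F)"
    unfolding sum_prod_insert_const[OF x(2,1) None] sum_prod_fun_upd_image[OF x(2,1) None]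
    using insert by simp
  also have "\<dots> = b * (y + b) ^ card (insert x F)"
    using insert by (simp add: algebra_simps)
  finally show ?case using insert by (simp add: insert_commute)
qed

lemma admissible_columns_empty:
  "admissible_columns m {} = {(\<lambda>i. None)(m := Some Alpha), (\<lambda>i. None)(m := Some Beta)}"
proof (intro equalityI subsetI)
  fix c assume c: "c \<in> admissible_columns m {}"
  then obtain s where s: "c m = Some s" by (auto simp: admissible_columns_def)
  have "c = (\<lambda>i. None)(m := Some s)" using c s by (auto simp: admissible_columns_def)
  then show "c \<in> {(\<lambda>i. None)(m := Some Alpha), (\<lambda>i. None)(m := Some Beta)}" by (cases s) auto
qed (auto simp: admissible_columns_def)

lemma fun_upd_alpha_free_column_admissible:
  assumes d: "d \<in> alpha_free_columns m F" and x: "x \<notin> F" "x < m" "\<forall>i\<in>F. x < i"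
  shows "d(x := Some s) \<in> admissible_columns m (insert x F)"
proof -
  have "d i \<noteq> Some Alpha" for i
    using d by (cases "i \<in> insert m F") (auto simp: alpha_free_columns_def)
  moreover have "d i = None" if "i < x" for i
  proof -
    have "i \<notin> insert m F" using that x by auto
    then show ?thesis using d by (simp add: alpha_free_columns_def)
  qed
  ultimately show ?thesis
    using d x by (auto simp: admissible_columns_def alpha_free_columns_def)
qed

text \<open>Split on the entry in the topmost candidate row \<open>x\<close>: once it is filled, no \<open>\<alpha>\<close> can
  occur below it.\<close>
lemma admissible_columns_insert_min:
  assumes x: "x \<notin> F" "x < m" "\<forall>i\<in>F. x < i"
  shows "admissible_columns m (insert x F) = admissible_columns m F
     \<union> (\<lambda>c. c(x := Some Beta)) ` alpha_free_columns m F
     \<union> (\<lambda>c. c(x := Some Alpha)) ` alpha_free_columns m F"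
proof (intro equalityI subsetI)
  fix c assume c: "c \<in> admissible_columns m (insert x F)"
  show "c \<in> admissible_columns m F \<union> (\<lambda>c. c(x := Some Beta)) ` alpha_free_columns m F
     \<union> (\<lambda>c. c(x := Some Alpha)) ` alpha_free_columns m F"
  proof (cases "c x")
    case None
    then show ?thesis using c by (auto simp: admissible_columns_def)
  next
    case (Some s)
    have "c m \<noteq> Some Alpha" "\<forall>i\<in>F. c i \<noteq> Some Alpha" "c m \<noteq> None"
      using c Some x by (auto simp: admissible_columns_def)
    then have "c(x := None) \<in> alpha_free_columns m F"
      using c x by (auto simp: admissible_columns_def alpha_free_columns_def sym_not_Alpha_iff)
    moreover have "c = (c(x := None))(x := Some s)" using Some by auto
    ultimately show ?thesis by (cases s) blast+
  qed
next
  fix c assume "c \<in> admissible_columns m F \<union> (\<lambda>c. c(x := Some Beta)) ` alpha_free_columns m F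
     \<union> (\<lambda>c. c(x := Some Alpha)) ` alpha_free_columns m F"
  then show "c \<in> admissible_columns m (insert x F)"
    using fun_upd_alpha_free_column_admissible[OF _ x] by (auto simp: admissible_columns_def)
qed

lemma sum_admissible_columns:
  assumes "finite F" "\<forall>i\<in>F. i < m"
  shows "(\<Sum>c\<in>admissible_columns m F. \<Prod>i\<in>insert m F. cell_weight a b y (c i)) = (a * y + b) * (y + b) ^ card F"
  using assms
proof (induction F rule: finite_linorder_min_induct)
  case empty
  have "(\<lambda>i. None)(m := Some Alpha) \<noteq> (\<lambda>i. None)(m := Some Beta)"
    by (metis fun_upd_same option.inject sym.distinct(1))
  then show ?case by (simp add: admissible_columns_empty)
next
  case (insert x F)
  let ?C = "admissible_columns m F" and ?A = "alpha_free_columns m F"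
  let ?g = "\<lambda>c. \<Prod>i\<in>insert x (insert m F). cell_weight a b y (c i)"
  have x: "x \<notin> F" "x < m" "\<forall>i\<in>F. x < i" using insert by auto
  have x': "finite (insert m F)" "x \<notin> insert m F" using insert by auto
  have C: "\<forall>c\<in>?C. c x = None" and A: "\<forall>c\<in>?A. c x = None"
    using x' by (auto simp: admissible_columns_def alpha_free_columns_def)
  have fin: "finite ?C" "finite ?A"
    using insert by (auto simp: finite_admissible_columns finite_alpha_free_columns)
  have disj1: "?C \<inter> (\<lambda>c. c(x := Some Beta)) ` ?A = {}"
    by (rule disjoint_by_value[where x = x and U = "{None}" and V = "{Some Beta}"]) (use C in auto)
  have disj2: "(?C \<union> (\<lambda>c. c(x := Some Beta)) ` ?A) \<inter> (\<lambda>c. c(x := Some Alpha)) ` ?A = {}"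
    by (rule disjoint_by_value[where x = x and U = "{None, Some Beta}" and V = "{Some Alpha}"])
      (use C in auto)
  have "(\<Sum>c\<in>admissible_columns m (insert x F). ?g c)
     = (\<Sum>c\<in>?C. ?g c) + (\<Sum>c\<in>(\<lambda>c. c(x := Some Beta)) ` ?A. ?g c)
      + (\<Sum>c\<in>(\<lambda>c. c(x := Some Alpha)) ` ?A. ?g c)"
    unfolding admissible_columns_insert_min[OF x]
    using fin disj1 disj2 by (simp add: sum.union_disjoint)
  also have "\<dots> = y * ((a * y + b) * (y + b) ^ card F) + b * (b * (y + b) ^ card F)
      + a * y * (b * (y + b) ^ card F)"
    unfolding sum_prod_insert_const[OF x' C] sum_prod_fun_upd_image[OF x' A]
    using insert.IH insert.prems sum_alpha_free_columns[OF insert.hyps(1), of m a b y] by auto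
  also have "\<dots> = (a * y + b) * (y + b) ^ card (insert x F)"
    using insert x by (simp add: algebra_simps)
  finally show ?case by (simp add: insert_commute)
qed

lemma support_add_column:
  assumes T: "T \<in> staircase n"
  shows "{p. add_column c T p = Some s} =
    (\<lambda>i. (i, 1)) ` {i. c i = Some s} \<union> (\<lambda>(i, j). (i, Suc j)) ` {p. T p = Some s}"
proof (intro equalityI subsetI)
  fix p assume "p \<in> {p. add_column c T p = Some s}"
  moreover obtain i j where p: "p = (i, j)" by (cases p)
  ultimately have "add_column c T (i, j) = Some s" by simp
  then have "(j = 1 \<and> c i = Some s) \<or> (j \<ge> 2 \<and> T (i, j - 1) = Some s)"
    by (auto simp: add_column_def split: if_splits)
  then show "p \<in> (\<lambda>i. (i, 1)) ` {i. c i = Some s} \<union> (\<lambda>(i, j). (i, Suc j)) ` {p. T p = Some s}"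
    using p by (force simp: image_iff)
qed (auto simp: add_column_def staircase_column_0[OF T])

lemma card_support_add_column:
  assumes T: "T \<in> staircase n" and c: "c \<in> admissible_columns m F" and F: "finite F"
  shows "card {p. add_column c T p = Some s} = card {i. c i = Some s} + card {p. T p = Some s}"
proof -
  have "finite {i. c i = Some s}"
    by (rule finite_subset[of _ "insert m F"]) (use c F in \<open>auto simp: admissible_columns_def\<close>)
  moreover have "inj_on (\<lambda>i. (i, 1::nat)) {i. c i = Some s}" "inj_on (\<lambda>(i, j). (i, Suc j)) {p. T p = Some s}"
    by (auto intro: inj_onI)
  moreover have "(\<lambda>i. (i, 1::nat)) ` {i. c i = Some s} \<inter> (\<lambda>(i, j). (i, Suc j)) ` {p. T p = Some s} = {}"
    using staircase_column_0[OF T] by auto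
  ultimately show ?thesis
    unfolding support_add_column[OF T]
    by (simp add: card_Un_disjoint card_image finite_support_staircase[OF T])
qed

lemma wt_add_column:
  assumes "T \<in> staircase n" "c \<in> admissible_columns m F" "finite F"
  shows "wt a b (add_column c T) = a ^ card {i. c i = Some Alpha} * b ^ card {i. c i = Some Beta} * wt a b T"
  unfolding wt_def N_alpha_def N_beta_def card_support_add_column[OF assms] by (simp add: power_add)

lemma beta_free_rows_add_column:
  assumes T: "T \<in> staircase n"
  shows "beta_free_rows (Suc n) (add_column c T) =
    {i \<in> insert (Suc n) (beta_free_rows n T). c i \<noteq> Some Beta}"
proof -
  have row: "(\<forall>j. add_column c T (i, j) \<noteq> Some Beta) \<longleftrightarrow> c i \<noteq> Some Beta \<and> (\<forall>j. T (i, j) \<noteq> Some Beta)"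
    for i
  proof (intro iffI conjI allI)
    assume row: "\<forall>j. add_column c T (i, j) \<noteq> Some Beta"
    show "c i \<noteq> Some Beta" using row[rule_format, of 1] by (simp add: add_column_def)
    fix j show "T (i, j) \<noteq> Some Beta"
      using row[rule_format, of "Suc j"] staircase_column_0[OF T, of i] by (cases "j = 0") (auto simp: add_column_def)
  next
    fix j assume "c i \<noteq> Some Beta \<and> (\<forall>j. T (i, j) \<noteq> Some Beta)"
    then show "add_column c T (i, j) \<noteq> Some Beta" by (simp add: add_column_def)
  qed
  have "T (Suc n, j) \<noteq> Some Beta" for j
    using staircase_outside[OF T, of "(Suc n, j)"] by (auto simp: boxes_def)
  then show ?thesis unfolding beta_free_rows_def row by auto
qed

lemma prod_cell_weight:
  assumes c: "c \<in> admissible_columns m F" and F: "finite F"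
  shows "(\<Prod>i\<in>insert m F. cell_weight a b y (c i)) = a ^ card {i. c i = Some Alpha}
    * b ^ card {i. c i = Some Beta} * y ^ card {i \<in> insert m F. c i \<noteq> Some Beta}"
proof -
  have "cell_weight a b y v = (if v = Some Alpha then a else 1) * (if v = Some Beta then b else 1)
      * (if v \<noteq> Some Beta then y else 1)" for v
    by (cases v rule: option.exhaust) (auto simp: cell_weight_def split: sym.splits)
  moreover have "{i \<in> insert m F. c i = Some s} = {i. c i = Some s}" for s
    using c by (auto simp: admissible_columns_def)
  ultimately show ?thesis
    using F by (simp add: prod.distrib prod.If_cases Int_def conj_commute)
qed

definition Z_rows :: "real \<Rightarrow> real \<Rightarrow> nat \<Rightarrow> real \<Rightarrow> real" where
  "Z_rows a b n y = (\<Sum>T\<in>staircase n. wt a b T * y ^ card (beta_free_rows n T))"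

lemma Z_rows_Suc: "Z_rows a b (Suc n) y = (a * y + b) * Z_rows a b n (y + b)"
proof -
  have "Z_rows a b (Suc n) y = (\<Sum>T\<in>staircase n. \<Sum>c\<in>admissible_columns (Suc n) (beta_free_rows n T).
      wt a b (add_column c T) * y ^ card (beta_free_rows (Suc n) (add_column c T)))"
    unfolding Z_rows_def by (rule sum_staircase_Suc)
  also have "\<dots> = (\<Sum>T\<in>staircase n. wt a b T * (\<Sum>c\<in>admissible_columns (Suc n) (beta_free_rows n T).
      \<Prod>i\<in>insert (Suc n) (beta_free_rows n T). cell_weight a b y (c i)))"
    unfolding sum_distrib_left
    by (intro sum.cong refl)
      (simp add: wt_add_column beta_free_rows_add_column prod_cell_weight finite_beta_free_rows)
  also have "\<dots> = (\<Sum>T\<in>staircase n. wt a b T * ((a * y + b) * (y + b) ^ card (beta_free_rows n T)))"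
  proof (intro sum.cong refl)
    fix T
    have "\<forall>i\<in>beta_free_rows n T. i < Suc n" by (auto simp: beta_free_rows_def)
    then show "wt a b T * (\<Sum>c\<in>admissible_columns (Suc n) (beta_free_rows n T).
      \<Prod>i\<in>insert (Suc n) (beta_free_rows n T). cell_weight a b y (c i))
      = wt a b T * ((a * y + b) * (y + b) ^ card (beta_free_rows n T))"
      by (simp add: sum_admissible_columns[OF finite_beta_free_rows])
  qed
  also have "\<dots> = (a * y + b) * Z_rows a b n (y + b)"
    unfolding Z_rows_def sum_distrib_left by (intro sum.cong refl) simp
  finally show ?thesis .
qed

lemma Z_rows_eq_prod: "Z_rows a b n y = (\<Prod>k<n. a * (y + real k * b) + b)"
proof (induction n arbitrary: y)
  case 0
  show ?case by (simp add: Z_rows_def staircase_0 wt_def N_alpha_def N_beta_def beta_free_rows_def)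
next
  case (Suc n)
  show ?case unfolding Z_rows_Suc Suc prod.lessThan_Suc_shift by (simp add: algebra_simps)
qed

definition Z :: "real \<Rightarrow> real \<Rightarrow> nat \<Rightarrow> real" where
  "Z a b n = (\<Sum>T\<in>staircase n. wt a b T)"

lemma Z_eq_prod: "Z a b n = (\<Prod>k<n. a + b + real k * a * b)"
proof -
  have "Z a b n = Z_rows a b n 1" by (simp add: Z_def Z_rows_def)
  then show ?thesis by (simp add: Z_rows_eq_prod algebra_simps)
qed

section \<open>Filled boxes on the second diagonal\<close>

definition skip :: "nat \<Rightarrow> nat \<Rightarrow> nat" where
  "skip t x = (if x \<le> t then x else Suc x)"

definition unskip :: "nat \<Rightarrow> nat \<Rightarrow> nat" where
  "unskip t x = (if x \<le> t then x else x - 1)"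

text \<open>\<open>delete_cross r c\<close> removes row \<open>r + 1\<close> and column \<open>c + 1\<close>; \<open>insert_cross r c\<close> puts them
  back, holding only a \<open>\<beta>\<close> at \<open>(r + 1, c)\<close> and an \<open>\<alpha>\<close> at \<open>(r, c + 1)\<close>.\<close>
definition delete_cross :: "nat \<Rightarrow> nat \<Rightarrow> tableau \<Rightarrow> tableau" where
  "delete_cross r c T = (\<lambda>(i, k). T (skip r i, skip c k))"

definition insert_cross :: "nat \<Rightarrow> nat \<Rightarrow> tableau \<Rightarrow> tableau" where
  "insert_cross r c U = (\<lambda>(i, k).
     if i = Suc r then (if k = c then Some Beta else None)
     else if k = Suc c then (if i = r then Some Alpha else None)
     else U (unskip r i, unskip c k))"

lemma delete_insert_cross: "delete_cross r c (insert_cross r c U) = U"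
  by (rule ext) (auto simp: insert_cross_def delete_cross_def skip_def unskip_def)

lemma insert_cross_skip: "insert_cross r c U (skip r i, skip c k) = U (i, k)"
  using delete_insert_cross[of r c U] by (metis case_prod_conv delete_cross_def)

lemma support_insert_cross:
  "{p. insert_cross r c U p = Some s} = {if s = Alpha then (r, Suc c) else (Suc r, c)}
    \<union> (\<lambda>(i, k). (skip r i, skip c k)) ` {p. U p = Some s}"
proof (intro equalityI subsetI)
  fix p assume "p \<in> {p. insert_cross r c U p = Some s}"
  moreover obtain i k where p: "p = (i, k)" by (cases p)
  ultimately have U: "insert_cross r c U (i, k) = Some s" by simp
  show "p \<in> {if s = Alpha then (r, Suc c) else (Suc r, c)} \<union> (\<lambda>(i, k). (skip r i, skip c k)) ` {p. U p = Some s}"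
  proof (cases "i = Suc r \<or> k = Suc c")
    case True
    then show ?thesis using U p by (cases s) (auto simp: insert_cross_def split: if_splits)
  next
    case False
    then have "U (unskip r i, unskip c k) = Some s" "p = (skip r (unskip r i), skip c (unskip c k))"
      using U p by (auto simp: insert_cross_def skip_def unskip_def)
    then show ?thesis by (auto simp: image_iff)
  qed
qed (auto simp: insert_cross_skip, auto simp: insert_cross_def sym_not_Alpha_iff)

lemma card_support_insert_cross:
  assumes "finite {p. U p = Some s}"
  shows "card {p. insert_cross r c U p = Some s} = Suc (card {p. U p = Some s})"
proof -
  have "inj_on (\<lambda>(i, k). (skip r i, skip c k)) {p. U p = Some s}"
    by (rule inj_onI) (auto simp: skip_def split: if_splits)
  moreover have "(if s = Alpha then (r, Suc c) else (Suc r, c)) \<notin> (\<lambda>(i, k). (skip r i, skip c k)) ` A" for A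
    by (auto simp: skip_def split: if_splits)
  ultimately show ?thesis
    unfolding support_insert_cross using assms by (simp add: card_image)
qed

lemma wt_insert_cross: "U \<in> staircase n \<Longrightarrow> wt a b (insert_cross r c U) = a * b * wt a b U"
  unfolding wt_def N_alpha_def N_beta_def by (simp add: card_support_insert_cross finite_support_staircase)

locale second_diagonal_box =
  fixes n r c :: nat
  assumes on_diagonal: "r + c = Suc n" and r_pos: "1 \<le> r" and c_pos: "1 \<le> c"
begin

lemma filled_box_cross:
  assumes T: "T \<in> staircase (Suc n)" and filled: "T (r, c) \<noteq> None"
  shows "T (Suc r, c) = Some Beta" "T (r, Suc c) = Some Alpha"
    and "k \<noteq> c \<Longrightarrow> T (Suc r, k) = None" "i \<noteq> r \<Longrightarrow> T (i, Suc c) = None"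
proof -
  obtain s where s: "T (Suc r, c) = Some s"
    using staircase_diagonal[OF T, of "Suc r" c] on_diagonal c_pos by (auto simp: boxes_def)
  with staircase_above_alpha[OF T, of "Suc r" c r] filled r_pos
  show beta: "T (Suc r, c) = Some Beta" by (cases s) auto
  obtain s' where s': "T (r, Suc c) = Some s'"
    using staircase_diagonal[OF T, of r "Suc c"] on_diagonal r_pos by (auto simp: boxes_def)
  with staircase_left_of_beta[OF T, of r "Suc c" c] filled c_pos
  show alpha: "T (r, Suc c) = Some Alpha" by (cases s') auto
  show "T (Suc r, k) = None" if "k \<noteq> c"
  proof (cases "k < c")
    case True
    then show ?thesis
      using staircase_left_of_beta[OF T beta, of k] staircase_column_0[OF T] by (cases "k = 0") auto
  next
    case False
    then show ?thesis using that on_diagonal staircase_outside[OF T] by (auto simp: boxes_def)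
  qed
  show "T (i, Suc c) = None" if "i \<noteq> r"
  proof (cases "0 < i \<and> i < r")
    case True
    then show ?thesis using staircase_above_alpha[OF T alpha, of i] by simp
  next
    case False
    then show ?thesis using that on_diagonal staircase_outside[OF T] by (auto simp: boxes_def)
  qed
qed

lemma delete_cross_in_staircase:
  assumes T: "T \<in> staircase (Suc n)" and filled: "T (r, c) \<noteq> None"
  shows "delete_cross r c T \<in> staircase n"
proof (rule staircaseI)
  fix p assume "p \<notin> boxes n"
  moreover obtain i k where p: "p = (i, k)" by (cases p)
  ultimately have "(skip r i, skip c k) \<notin> boxes (Suc n)" using on_diagonal by (auto simp: boxes_def skip_def)
  then show "delete_cross r c T p = None" using staircase_outside[OF T] p by (simp add: delete_cross_def)
next
  fix i k i' assume "delete_cross r c T (i, k) = Some Alpha" "1 \<le> i'" "i' < i"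
  moreover have "1 \<le> skip r i'" "skip r i' < skip r i" using \<open>1 \<le> i'\<close> \<open>i' < i\<close> by (auto simp: skip_def)
  ultimately show "delete_cross r c T (i', k) = None"
    using staircase_above_alpha[OF T] by (simp add: delete_cross_def)
next
  fix i k k' assume "delete_cross r c T (i, k) = Some Beta" "1 \<le> k'" "k' < k"
  moreover have "1 \<le> skip c k'" "skip c k' < skip c k" using \<open>1 \<le> k'\<close> \<open>k' < k\<close> by (auto simp: skip_def)
  ultimately show "delete_cross r c T (i, k') = None"
    using staircase_left_of_beta[OF T] by (simp add: delete_cross_def)
next
  fix i k assume a: "(i, k) \<in> boxes n" "i + k = n + 1"
  show "delete_cross r c T (i, k) \<noteq> None"
  proof (cases "i \<le> r \<and> k \<le> c")
    case True
    then have "i = r" "k = c" using a on_diagonal by auto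
    then show ?thesis using filled by (simp add: delete_cross_def skip_def)
  next
    case False
    then show ?thesis
      using a on_diagonal staircase_diagonal[OF T, of "skip r i" "skip c k"]
      by (auto simp: delete_cross_def boxes_def skip_def)
  qed
qed

lemma insert_delete_cross:
  assumes T: "T \<in> staircase (Suc n)" and filled: "T (r, c) \<noteq> None"
  shows "insert_cross r c (delete_cross r c T) = T"
proof (rule ext)
  fix p :: "nat \<times> nat"
  obtain i k where p: "p = (i, k)" by (cases p)
  show "insert_cross r c (delete_cross r c T) p = T p"
  proof (cases "i = Suc r \<or> k = Suc c")
    case True
    then show ?thesis using filled_box_cross[OF T filled] p by (auto simp: insert_cross_def)
  next
    case False
    then have "skip r (unskip r i) = i" "skip c (unskip c k) = k" by (auto simp: skip_def unskip_def)
    then show ?thesis using p False by (simp add: insert_cross_def delete_cross_def)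
  qed
qed

lemma insert_cross_above_alpha:
  assumes U: "U \<in> staircase n" and alpha: "insert_cross r c U (i, k) = Some Alpha"
    and "1 \<le> i'" "i' < i"
  shows "insert_cross r c U (i', k) = None"
proof (cases "k = Suc c")
  case True
  then show ?thesis using alpha \<open>i' < i\<close> by (auto simp: insert_cross_def split: if_splits)
next
  case False
  have i: "i \<noteq> Suc r" using alpha False by (auto simp: insert_cross_def split: if_splits)
  have Ua: "U (unskip r i, unskip c k) = Some Alpha" using alpha i False by (simp add: insert_cross_def)
  show ?thesis
  proof (cases "i' = Suc r")
    case True
    have "k \<noteq> c"
    proof
      assume "k = c"
      then have "(unskip r i, unskip c k) \<notin> boxes n"
        using True \<open>i' < i\<close> on_diagonal i by (auto simp: boxes_def unskip_def)
      then show False using staircase_outside[OF U] Ua by simp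
    qed
    then show ?thesis using True by (simp add: insert_cross_def)
  next
    case False
    have "1 \<le> unskip r i'" "unskip r i' < unskip r i"
      using \<open>1 \<le> i'\<close> \<open>i' < i\<close> i False r_pos by (auto simp: unskip_def)
    then show ?thesis
      using staircase_above_alpha[OF U Ua] False \<open>k \<noteq> Suc c\<close> by (simp add: insert_cross_def)
  qed
qed

lemma insert_cross_left_of_beta:
  assumes U: "U \<in> staircase n" and beta: "insert_cross r c U (i, k) = Some Beta"
    and "1 \<le> k'" "k' < k"
  shows "insert_cross r c U (i, k') = None"
proof (cases "i = Suc r")
  case True
  then show ?thesis using beta \<open>k' < k\<close> by (auto simp: insert_cross_def split: if_splits)
next
  case False
  have k: "k \<noteq> Suc c" using beta False by (auto simp: insert_cross_def split: if_splits)
  have Ub: "U (unskip r i, unskip c k) = Some Beta" using beta k False by (simp add: insert_cross_def)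
  show ?thesis
  proof (cases "k' = Suc c")
    case True
    have "i \<noteq> r"
    proof
      assume "i = r"
      then have "(unskip r i, unskip c k) \<notin> boxes n"
        using True \<open>k' < k\<close> on_diagonal k by (auto simp: boxes_def unskip_def)
      then show False using staircase_outside[OF U] Ub by simp
    qed
    then show ?thesis using True False by (simp add: insert_cross_def)
  next
    case k': False
    have "1 \<le> unskip c k'" "unskip c k' < unskip c k"
      using \<open>1 \<le> k'\<close> \<open>k' < k\<close> k k' c_pos by (auto simp: unskip_def)
    then show ?thesis
      using staircase_left_of_beta[OF U Ub] False k' by (simp add: insert_cross_def)
  qed
qed

lemma insert_cross_in_staircase:
  assumes U: "U \<in> staircase n"
  shows "insert_cross r c U \<in> staircase (Suc n)"
proof (rule staircaseI)
  fix p assume p: "p \<notin> boxes (Suc n)"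
  obtain i k where [simp]: "p = (i, k)" by (cases p)
  show "insert_cross r c U p = None"
  proof (cases "i = Suc r \<or> k = Suc c")
    case True
    then show ?thesis using p on_diagonal r_pos c_pos by (auto simp: insert_cross_def boxes_def)
  next
    case False
    then have "(unskip r i, unskip c k) \<notin> boxes n"
      using p on_diagonal r_pos c_pos by (auto simp: boxes_def unskip_def)
    then show ?thesis using staircase_outside[OF U] False by (auto simp: insert_cross_def)
  qed
next
  fix i k assume a: "(i, k) \<in> boxes (Suc n)" "i + k = Suc n + 1"
  show "insert_cross r c U (i, k) \<noteq> None"
  proof (cases "i = Suc r \<or> k = Suc c")
    case True
    then show ?thesis using a on_diagonal by (auto simp: insert_cross_def)
  next
    case False
    then have "(unskip r i, unskip c k) \<in> boxes n" "unskip r i + unskip c k = n + 1"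
      using a on_diagonal r_pos c_pos by (auto simp: boxes_def unskip_def)
    then show ?thesis using staircase_diagonal[OF U] False by (simp add: insert_cross_def)
  qed
qed (use insert_cross_above_alpha[OF U] insert_cross_left_of_beta[OF U] in blast)+

lemma insert_cross_box: "U \<in> staircase n \<Longrightarrow> insert_cross r c U (r, c) \<noteq> None"
  using staircase_diagonal[of U n r c] on_diagonal r_pos c_pos
  by (simp add: insert_cross_def unskip_def boxes_def)

lemma insert_cross_second_diagonal:
  assumes "1 \<le> j" "j + 2 \<le> c"
  shows "insert_cross r c U (Suc n - j, j) = U (n - j, j)"
proof -
  have "Suc n - j \<noteq> Suc r" "\<not> Suc n - j \<le> r" "j \<noteq> Suc c" "j \<le> c" "Suc n - j - 1 = n - j"
    using assms on_diagonal by arith+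
  then show ?thesis by (simp add: insert_cross_def unskip_def)
qed

end

definition filled_weight :: "real \<Rightarrow> real \<Rightarrow> nat \<Rightarrow> nat set \<Rightarrow> real" where
  "filled_weight a b n J = (\<Sum>T\<in>{T \<in> staircase n. \<forall>j\<in>J. T (n - j, j) \<noteq> None}. wt a b T)"

lemma filled_weight_empty: "filled_weight a b n {} = Z a b n"
  by (simp add: filled_weight_def Z_def)

lemma (in second_diagonal_box) filled_weight_insert:
  assumes J: "\<forall>j\<in>J. 1 \<le> j \<and> j + 2 \<le> c"
  shows "filled_weight a b (Suc n) (insert c J) = a * b * filled_weight a b n J"
proof -
  let ?S = "{T \<in> staircase (Suc n). \<forall>j\<in>insert c J. T (Suc n - j, j) \<noteq> None}"
  let ?U = "{U \<in> staircase n. \<forall>j\<in>J. U (n - j, j) \<noteq> None}"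
  have r: "Suc n - c = r" using on_diagonal by simp
  have diagonal: "insert_cross r c U (Suc n - j, j) = U (n - j, j)" if "j \<in> J" for j U
    using J that by (simp add: insert_cross_second_diagonal)
  have "(\<Sum>U\<in>?U. wt a b (insert_cross r c U)) = (\<Sum>T\<in>?S. wt a b T)"
  proof (rule sum.reindex_bij_witness[where i = "delete_cross r c" and j = "insert_cross r c"])
    fix T assume "T \<in> ?S"
    then have T: "T \<in> staircase (Suc n)" "T (r, c) \<noteq> None" "\<forall>j\<in>J. T (Suc n - j, j) \<noteq> None"
      using r by auto
    show "insert_cross r c (delete_cross r c T) = T" by (rule insert_delete_cross[OF T(1,2)])
    have "delete_cross r c T (n - j, j) = T (Suc n - j, j)" if "j \<in> J" for j
      using diagonal[OF that, of "delete_cross r c T"] by (simp add: insert_delete_cross[OF T(1,2)])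
    then show "delete_cross r c T \<in> ?U" using delete_cross_in_staircase[OF T(1,2)] T(3) by simp
  next
    fix U assume "U \<in> ?U"
    then have U: "U \<in> staircase n" "\<forall>j\<in>J. U (n - j, j) \<noteq> None" by auto
    show "delete_cross r c (insert_cross r c U) = U" by (rule delete_insert_cross)
    show "insert_cross r c U \<in> ?S"
      using insert_cross_in_staircase[OF U(1)] insert_cross_box[OF U(1)] U(2) r by (simp add: diagonal)
  qed (rule refl)
  then have "(\<Sum>T\<in>?S. wt a b T) = (\<Sum>U\<in>?U. wt a b (insert_cross r c U))" ..
  also have "\<dots> = a * b * filled_weight a b n J"
    unfolding filled_weight_def sum_distrib_left by (intro sum.cong refl) (clarsimp simp: wt_insert_cross)
  finally show ?thesis unfolding filled_weight_def .
qed

definition no_adjacent :: "nat set \<Rightarrow> bool" where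
  "no_adjacent J \<longleftrightarrow> (\<forall>j\<in>J. Suc j \<notin> J)"

text \<open>Peel off the box of largest column index, which lies two columns beyond all others.\<close>
lemma filled_weight_no_adjacent:
  "J \<subseteq> {1..n - 1} \<Longrightarrow> no_adjacent J \<Longrightarrow> filled_weight a b n J = (a * b) ^ card J * Z a b (n - card J)"
proof (induction "card J" arbitrary: J n)
  case 0
  then have "J = {}" using finite_subset[OF "0.prems"(1)] by auto
  then show ?case by (simp add: filled_weight_empty)
next
  case (Suc m)
  have fin: "finite J" using finite_subset[OF Suc.prems(1)] by simp
  then have "J \<noteq> {}" using Suc.hyps(2) by auto
  define c where "c = Max J"
  have c: "c \<in> J" "\<forall>j\<in>J. j \<le> c" using fin \<open>J \<noteq> {}\<close> by (simp_all add: c_def)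
  obtain n' where n': "n = Suc n'" using c Suc.prems(1) by (cases n) auto
  have "1 \<le> c" "c \<le> n'" using c(1) Suc.prems(1) n' by auto
  interpret second_diagonal_box n' "Suc n' - c" c
    by unfold_locales (use \<open>1 \<le> c\<close> \<open>c \<le> n'\<close> in auto)
  define J' where "J' = J - {c}"
  have J': "J = insert c J'" "card J' = m" using c Suc.hyps(2) fin by (auto simp: J'_def)
  have J'_far: "\<forall>j\<in>J'. 1 \<le> j \<and> j + 2 \<le> c"
  proof
    fix j assume j: "j \<in> J'"
    then have "j < c" "1 \<le> j" "Suc j \<noteq> c" using c Suc.prems unfolding J'_def no_adjacent_def by auto
    then show "1 \<le> j \<and> j + 2 \<le> c" by simp
  qed
  have "J' \<subseteq> {1..n' - 1}" using J'_far \<open>c \<le> n'\<close> by force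
  moreover have "no_adjacent J'" using Suc.prems(2) by (auto simp: J'_def no_adjacent_def)
  ultimately have "filled_weight a b n' J' = (a * b) ^ m * Z a b (n' - m)"
    using Suc.hyps(1) J'(2) by simp
  moreover have "filled_weight a b n J = a * b * filled_weight a b n' J'"
    unfolding n' J'(1) by (rule filled_weight_insert[OF J'_far])
  moreover have "card J = Suc m" using Suc.hyps(2) by simp
  ultimately show ?case using n' by simp
qed

lemma filled_weight_adjacent:
  assumes "j \<in> J" "Suc j \<in> J" "J \<subseteq> {1..n - 1}"
  shows "filled_weight a b n J = 0"
proof -
  have "T (n - Suc j, Suc j) = None" if T: "T \<in> staircase n" "T (n - j, j) \<noteq> None" for T
  proof -
    obtain n' where n': "n = Suc n'" using assms by (cases n) auto
    interpret second_diagonal_box n' "n - j" j using assms n' by unfold_locales auto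
    have "T (n - j, Suc j) = Some Alpha" using filled_box_cross T n' by simp
    then show ?thesis using staircase_above_alpha[OF T(1)] assms by auto
  qed
  then have "{T \<in> staircase n. \<forall>j\<in>J. T (n - j, j) \<noteq> None} = {}" using assms by blast
  then show ?thesis unfolding filled_weight_def by (simp only: sum.empty)
qed

section \<open>Inclusion--exclusion\<close>

lemma sum_Pow_alternating_choose:
  "finite A \<Longrightarrow> (\<Sum>J\<in>Pow A. (-1::real) ^ (card J + k) * real (card J choose k)) = (if card A = k then 1 else 0)"
proof (induction A arbitrary: k rule: finite_induct)
  case empty
  then show ?case by (cases k) auto
next
  case (insert x A)
  let ?s = "\<lambda>k. \<Sum>J\<in>Pow A. (-1::real) ^ (card J + k) * real (card J choose k)"
  have inj: "inj_on (insert x) (Pow A)"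
    by (rule inj_onI) (use insert.hyps(2) in \<open>metis PowD insert_ident subsetD\<close>)
  have disj: "Pow A \<inter> insert x ` Pow A = {}" using insert.hyps(2) by auto
  have card: "J \<in> Pow A \<Longrightarrow> card (insert x J) = Suc (card J)" for J
    using insert.hyps finite_subset by (metis PowD card_insert_disjoint subsetD)
  have "(\<Sum>J\<in>Pow (insert x A). (-1::real) ^ (card J + k) * real (card J choose k))
      = ?s k + (\<Sum>J\<in>Pow A. (-1::real) ^ (Suc (card J) + k) * real (Suc (card J) choose k))"
    unfolding Pow_insert using insert.hyps(1) disj
    by (subst sum.union_disjoint) (auto simp: sum.reindex[OF inj] card)
  also have "\<dots> = (if card (insert x A) = k then 1 else 0)"
  proof (cases k)
    case 0
    then show ?thesis using insert by (simp add: sum_negf)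
  next
    case (Suc k')
    have "(\<Sum>J\<in>Pow A. (-1::real) ^ (Suc (card J) + k) * real (Suc (card J) choose k)) = - ?s k + ?s k'"
      unfolding Suc by (simp add: sum.distrib sum_negf algebra_simps)
    then show ?thesis using insert Suc by simp
  qed
  finally show ?case .
qed

definition filled_second_diagonal :: "nat \<Rightarrow> tableau \<Rightarrow> nat set" where
  "filled_second_diagonal n T = {j \<in> {1..n - 1}. T (n - j, j) \<noteq> None}"

lemma sum_wt_X_eq_inclusion_exclusion:
  "(\<Sum>T\<in>{T \<in> staircase n. X n T = k}. wt a b T) =
   (\<Sum>J\<in>Pow {1..n - 1}. (-1) ^ (card J + k) * real (card J choose k) * filled_weight a b n J)"
proof -
  let ?D = "filled_second_diagonal n" and ?e = "\<lambda>J. (-1::real) ^ (card J + k) * real (card J choose k)"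
  have "(\<Sum>T\<in>{T \<in> staircase n. X n T = k}. wt a b T)
      = (\<Sum>T\<in>staircase n. wt a b T * (if card (?D T) = k then 1 else 0))"
    by (simp add: sum.inter_filter[symmetric] finite_staircase X_def filled_second_diagonal_def
        if_distrib cong: if_cong)
  also have "\<dots> = (\<Sum>T\<in>staircase n. \<Sum>J\<in>{J \<in> Pow {1..n - 1}. J \<subseteq> ?D T}. wt a b T * ?e J)"
  proof (rule sum.cong[OF refl])
    fix T
    have "{J \<in> Pow {1..n - 1}. J \<subseteq> ?D T} = Pow (?D T)" "finite (?D T)"
      by (auto simp: filled_second_diagonal_def)
    then show "wt a b T * (if card (?D T) = k then 1 else 0) =
        (\<Sum>J\<in>{J \<in> Pow {1..n - 1}. J \<subseteq> ?D T}. wt a b T * ?e J)"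
      by (simp add: sum_distrib_left[symmetric] sum_Pow_alternating_choose)
  qed
  also have "\<dots> = (\<Sum>J\<in>Pow {1..n - 1}. \<Sum>T\<in>{T \<in> staircase n. J \<subseteq> ?D T}. wt a b T * ?e J)"
    by (rule sum.swap_restrict) (auto simp: finite_staircase)
  also have "\<dots> = (\<Sum>J\<in>Pow {1..n - 1}. ?e J * filled_weight a b n J)"
  proof (rule sum.cong[OF refl])
    fix J assume "J \<in> Pow {1..n - 1}"
    then have "{T \<in> staircase n. J \<subseteq> ?D T} = {T \<in> staircase n. \<forall>j\<in>J. T (n - j, j) \<noteq> None}"
      by (auto simp: filled_second_diagonal_def)
    then show "(\<Sum>T\<in>{T \<in> staircase n. J \<subseteq> ?D T}. wt a b T * ?e J) = ?e J * filled_weight a b n J"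
      unfolding filled_weight_def sum_distrib_right[symmetric] by (simp only: mult.commute)
  qed
  finally show ?thesis .
qed

definition no_adjacent_subsets :: "nat \<Rightarrow> nat \<Rightarrow> nat set set" where
  "no_adjacent_subsets N m = {J. J \<subseteq> {1..N} \<and> no_adjacent J \<and> card J = m}"

lemma finite_no_adjacent_subsets: "finite (no_adjacent_subsets N m)"
  by (rule finite_subset[of _ "Pow {1..N}"]) (auto simp: no_adjacent_subsets_def)

lemma no_adjacent_subsets_Suc_Suc:
  "no_adjacent_subsets (Suc (Suc N)) (Suc m) =
    no_adjacent_subsets (Suc N) (Suc m) \<union> insert (Suc (Suc N)) ` no_adjacent_subsets N m"
proof (intro equalityI subsetI)
  fix J assume "J \<in> no_adjacent_subsets (Suc (Suc N)) (Suc m)"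
  then have J: "J \<subseteq> {1..Suc (Suc N)}" "no_adjacent J" "card J = Suc m"
    by (auto simp: no_adjacent_subsets_def)
  show "J \<in> no_adjacent_subsets (Suc N) (Suc m) \<union> insert (Suc (Suc N)) ` no_adjacent_subsets N m"
  proof (cases "Suc (Suc N) \<in> J")
    case False
    then show ?thesis using J by (auto simp: no_adjacent_subsets_def le_Suc_eq)
  next
    case True
    then have "Suc N \<notin> J" using J(2) by (auto simp: no_adjacent_def)
    then have "J - {Suc (Suc N)} \<in> no_adjacent_subsets N m"
      using J True finite_subset[OF J(1)] by (auto simp: no_adjacent_subsets_def no_adjacent_def le_Suc_eq)
    moreover have "J = insert (Suc (Suc N)) (J - {Suc (Suc N)})" using True by auto
    ultimately show ?thesis by blast
  qed
next
  fix J assume "J \<in> no_adjacent_subsets (Suc N) (Suc m) \<union> insert (Suc (Suc N)) ` no_adjacent_subsets N m"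
  then show "J \<in> no_adjacent_subsets (Suc (Suc N)) (Suc m)"
  proof
    assume "J \<in> insert (Suc (Suc N)) ` no_adjacent_subsets N m"
    then obtain J' where "J = insert (Suc (Suc N)) J'" "J' \<subseteq> {1..N}" "no_adjacent J'" "card J' = m"
      by (auto simp: no_adjacent_subsets_def)
    moreover have "finite J'" "Suc (Suc N) \<notin> J'" "Suc N \<notin> J'" using \<open>J' \<subseteq> {1..N}\<close> finite_subset by auto
    ultimately show ?thesis by (auto simp: no_adjacent_subsets_def no_adjacent_def)
  qed (auto simp: no_adjacent_subsets_def)
qed

lemma no_adjacent_subsets_0: "no_adjacent_subsets N 0 = {{}}"
proof -
  have "J \<subseteq> {1..N} \<Longrightarrow> card J = 0 \<Longrightarrow> J = {}" for J
    using finite_subset[of J "{1..N}"] by auto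
  then show ?thesis by (auto simp: no_adjacent_subsets_def no_adjacent_def)
qed

lemma no_adjacent_subsets_1:
  "no_adjacent_subsets (Suc 0) m = (if m = 0 then {{}} else if m = 1 then {{1}} else {})"
proof -
  have "J \<subseteq> {1..1} \<longleftrightarrow> J \<in> {{}, {1}}" for J :: "nat set" by auto
  then have "no_adjacent_subsets (Suc 0) m = {J \<in> {{}, {1}}. card J = m}"
    by (auto simp: no_adjacent_subsets_def no_adjacent_def)
  also have "\<dots> = (if m = 0 then {{}} else if m = 1 then {{1}} else {})"
    by auto
  finally show ?thesis .
qed

lemma card_no_adjacent_subsets: "card (no_adjacent_subsets N m) = (N + 1 - m) choose m"
proof (induction N arbitrary: m rule: induct_nat_012)
  case 0
  have "no_adjacent_subsets 0 m = (if m = 0 then {{}} else {})"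
    by (auto simp: no_adjacent_subsets_def no_adjacent_def)
  then show ?case by (cases "m \<le> 1") auto
next
  case 1
  show ?case unfolding no_adjacent_subsets_1 by (cases "m = 0"; cases "m = 1") simp_all
next
  case (ge2 N)
  show ?case
  proof (cases m)
    case 0
    then show ?thesis by (simp add: no_adjacent_subsets_0)
  next
    case (Suc m')
    have disj: "no_adjacent_subsets (Suc N) (Suc m') \<inter> insert (Suc (Suc N)) ` no_adjacent_subsets N m' = {}"
      by (auto simp: no_adjacent_subsets_def)
    have "Suc (Suc N) \<notin> J" if "J \<in> no_adjacent_subsets N m'" for J
      using that by (auto simp: no_adjacent_subsets_def)
    then have inj: "inj_on (insert (Suc (Suc N))) (no_adjacent_subsets N m')"
      by (intro inj_onI) (metis insert_ident)
    have "card (no_adjacent_subsets (Suc (Suc N)) m) =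
        card (no_adjacent_subsets (Suc N) (Suc m')) + card (no_adjacent_subsets N m')"
      unfolding Suc no_adjacent_subsets_Suc_Suc
      using disj by (simp add: card_Un_disjoint finite_no_adjacent_subsets card_image[OF inj])
    also have "\<dots> = (Suc (Suc N) + 1 - m) choose m"
      using ge2 Suc by (cases "m' \<le> N + 1") (simp_all add: Suc_diff_le)
    finally show ?thesis .
  qed
qed

lemma sum_filled_weight_Pow:
  "(\<Sum>J\<in>Pow {1..n - 1}. g (card J) * filled_weight a b n J) =
   (\<Sum>J\<in>{J \<in> Pow {1..n - 1}. no_adjacent J}. g (card J) * ((a * b) ^ card J * Z a b (n - card J)))"
proof -
  have "(\<Sum>J\<in>Pow {1..n - 1}. g (card J) * filled_weight a b n J) =
      (\<Sum>J\<in>{J \<in> Pow {1..n - 1}. no_adjacent J}. g (card J) * filled_weight a b n J)"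
  proof (rule sum.mono_neutral_right)
    show "\<forall>J\<in>Pow {1..n - 1} - {J \<in> Pow {1..n - 1}. no_adjacent J}. g (card J) * filled_weight a b n J = 0"
    proof
      fix J assume "J \<in> Pow {1..n - 1} - {J \<in> Pow {1..n - 1}. no_adjacent J}"
      then obtain j where "j \<in> J" "Suc j \<in> J" "J \<subseteq> {1..n - 1}" by (auto simp: no_adjacent_def)
      then show "g (card J) * filled_weight a b n J = 0" by (simp add: filled_weight_adjacent)
    qed
  qed auto
  also have "\<dots> = (\<Sum>J\<in>{J \<in> Pow {1..n - 1}. no_adjacent J}. g (card J) * ((a * b) ^ card J * Z a b (n - card J)))"
    by (intro sum.cong refl) (clarsimp simp: filled_weight_no_adjacent)
  finally show ?thesis .
qed

lemma sum_no_adjacent_by_card: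
  assumes "N \<le> M"
  shows "(\<Sum>J\<in>{J \<in> Pow {1..N}. no_adjacent J}. h (card J)) =
    (\<Sum>m\<le>M. real (card (no_adjacent_subsets N m)) * h m)"
proof -
  let ?A = "{J \<in> Pow {1..N}. no_adjacent J}"
  have "card ` ?A \<subseteq> {..M}"
  proof
    fix m assume "m \<in> card ` ?A"
    then obtain J where "J \<subseteq> {1..N}" "m = card J" by auto
    then show "m \<in> {..M}" using card_mono[of "{1..N}" J] assms by simp
  qed
  then have "(\<Sum>J\<in>?A. h (card J)) = (\<Sum>m\<le>M. \<Sum>J\<in>{J \<in> ?A. card J = m}. h (card J))"
    by (intro sum.group[symmetric]) auto
  also have "\<dots> = (\<Sum>m\<le>M. real (card (no_adjacent_subsets N m)) * h m)"
  proof (rule sum.cong[OF refl])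
    fix m
    have "{J \<in> ?A. card J = m} = no_adjacent_subsets N m" by (auto simp: no_adjacent_subsets_def)
    moreover have "(\<Sum>J\<in>no_adjacent_subsets N m. h (card J)) = (\<Sum>J\<in>no_adjacent_subsets N m. h m)"
      by (intro sum.cong refl) (simp add: no_adjacent_subsets_def)
    ultimately show "(\<Sum>J\<in>{J \<in> ?A. card J = m}. h (card J)) = real (card (no_adjacent_subsets N m)) * h m"
      by simp
  qed
  finally show ?thesis .
qed

lemma sum_wt_X_eq:
  "(\<Sum>T\<in>{T \<in> staircase n. X n T = k}. wt a b T) = (\<Sum>m\<le>n. (-1) ^ (m + k) * real (m choose k)
     * real (card (no_adjacent_subsets (n - 1) m)) * (a * b) ^ m * Z a b (n - m))"
  unfolding sum_wt_X_eq_inclusion_exclusion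
    sum_filled_weight_Pow[where g = "\<lambda>m. (-1) ^ (m + k) * real (m choose k)"]
    sum_no_adjacent_by_card[OF diff_le_self,
      where h = "\<lambda>m. (-1) ^ (m + k) * real (m choose k) * ((a * b) ^ m * Z a b (n - m))"]
  by (simp add: mult_ac)

section \<open>Binomial moments and the Poisson limit\<close>

lemma tendsto_ratio_1: "(\<lambda>n. (real n - c) / (K + real n)) \<longlonglongrightarrow> 1"
  by real_asymp

lemma choose_div_fact: "real ((m + k) choose k) / fact (m + k) = 1 / (fact k * fact m)"
proof -
  have "fact k * fact m * real ((m + k) choose k) = (fact (m + k) :: real)"
    using binomial_fact_lemma[of k "m + k"] by (metis add_diff_cancel_right' le_add2 of_nat_fact of_nat_mult)
  then show ?thesis by (simp add: field_simps)
qed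

lemma summable_choose_div_fact: "summable (\<lambda>m. real (m choose k) / fact m)"
proof -
  have "summable (\<lambda>m. 1 / fact k * (inverse (fact m) * (1::real) ^ m))"
    using summable_exp[of "1::real"] by (rule summable_mult)
  then have "summable (\<lambda>m. real ((m + k) choose k) / fact (m + k))"
    by (simp add: choose_div_fact field_simps)
  then show ?thesis by (rule summable_iff_shift[THEN iffD1])
qed

lemma sums_alternating_choose_div_fact:
  "(\<lambda>m. (-1) ^ (m + k) * real (m choose k) / fact m) sums (exp (-1) / fact k)"
proof -
  have "(\<lambda>m. (-1::real) ^ m / fact m) sums exp (-1)"
    using exp_converges[of "-1::real"] by (simp add: divide_inverse mult.commute)
  then have "(\<lambda>m. 1 / fact k * ((-1::real) ^ m / fact m)) sums (1 / fact k * exp (-1))"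
    by (rule sums_mult)
  moreover have "(-1) ^ (m + k + k) * real ((m + k) choose k) / fact (m + k) = 1 / fact k * ((-1::real) ^ m / fact m)"
    for m
    using choose_div_fact[of m k] by (simp add: power_add field_simps)
  moreover have "(\<Sum>i<k. (-1) ^ (i + k) * real (i choose k) / fact i) = (0::real)"
    by (rule sum.neutral) simp
  ultimately show ?thesis
    using sums_iff_shift[of "\<lambda>m. (-1) ^ (m + k) * real (m choose k) / fact m" k] by simp
qed

text \<open>Method of moments for \<open>Poisson(1)\<close>: Tannery's theorem lets the limit pass through the
  inclusion--exclusion series when the binomial moments are dominated by those of \<open>Poisson(1)\<close>.\<close>
lemma alternating_binomial_moments_tendsto:
  fixes B :: "nat \<Rightarrow> nat \<Rightarrow> real"
  assumes lim: "\<And>m. (\<lambda>n. B n m) \<longlonglongrightarrow> 1 / fact m"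
    and bound: "\<And>n m. \<bar>B n m\<bar> \<le> 1 / fact m"
    and vanish: "\<And>n m. n < m \<Longrightarrow> B n m = 0"
  shows "(\<lambda>n. \<Sum>m\<le>n. (-1) ^ (m + k) * real (m choose k) * B n m) \<longlonglongrightarrow> exp (-1) / fact k"
proof -
  define f where "f m n = (-1) ^ (m + k) * real (m choose k) * B n m" for m n
  have "(\<lambda>n. \<Sum>m. f m n) \<longlonglongrightarrow> (\<Sum>m. (-1) ^ (m + k) * real (m choose k) / fact m)"
  proof (rule tannerys_theorem[where M = "\<lambda>m. real (m choose k) / fact m", THEN conjunct2, THEN conjunct2])
    show "(\<lambda>n. f m n) \<longlonglongrightarrow> (-1) ^ (m + k) * real (m choose k) / fact m" for m
      unfolding f_def using tendsto_mult_left[OF lim[of m], of "(-1) ^ (m + k) * real (m choose k)"] by simp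
    show "\<forall>\<^sub>F (m, n) in at_top \<times>\<^sub>F sequentially. norm (f m n) \<le> real (m choose k) / fact m"
      using mult_left_mono[OF bound] by (intro always_eventually) (simp add: f_def abs_mult)
  qed (auto simp: summable_choose_div_fact)
  moreover have "(\<Sum>m. f m n) = (\<Sum>m\<le>n. (-1) ^ (m + k) * real (m choose k) * B n m)" for n
    by (subst suminf_finite[of "{..n}"]) (auto simp: f_def vanish)
  ultimately show ?thesis
    using sums_alternating_choose_div_fact[THEN sums_unique, symmetric] by simp
qed

lemma finite_nat_le_real: "finite {k::nat. real k \<le> x}"
proof (rule finite_subset[of _ "{..nat \<lceil>x\<rceil>}"])
  show "{k::nat. real k \<le> x} \<subseteq> {..nat \<lceil>x\<rceil>}"
  proof
    fix k assume "k \<in> {k::nat. real k \<le> x}"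
    then have "real k \<le> real_of_int \<lceil>x\<rceil>" using le_of_int_ceiling[of x] by (simp del: le_of_int_ceiling)
    then show "k \<in> {..nat \<lceil>x\<rceil>}" by (simp add: nat_le_iff)
  qed
qed simp

lemma cdf_distr_nat:
  fixes f :: "'a \<Rightarrow> nat"
  shows "cdf (distr (measure_pmf p) borel (\<lambda>s. real (f s))) x =
    (\<Sum>k\<in>{k. real k \<le> x}. measure_pmf.prob p (f -` {k}))"
proof -
  have "cdf (distr (measure_pmf p) borel (\<lambda>s. real (f s))) x = measure_pmf.prob (map_pmf f p) {k. real k \<le> x}"
    unfolding cdf_def2 by (subst measure_distr) (auto simp: vimage_def)
  also have "\<dots> = (\<Sum>k\<in>{k. real k \<le> x}. pmf (map_pmf f p) k)"
    by (rule measure_measure_pmf_finite) (rule finite_nat_le_real)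
  finally show ?thesis by (simp add: pmf_map)
qed

locale positive_weights =
  fixes a b :: real
  assumes a_pos: "0 < a" and b_pos: "0 < b"
begin

lemma Z_factor_pos: "0 < a + b + real k * a * b"
  using a_pos b_pos by (simp add: add_pos_nonneg)

lemma Z_pos: "0 < Z a b n"
  unfolding Z_eq_prod by (rule prod_pos) (simp add: Z_factor_pos)

lemma Z_split: "m \<le> n \<Longrightarrow> Z a b n = Z a b (n - m) * (\<Prod>i<m. a + b + real (n - m + i) * a * b)"
proof (induction m)
  case (Suc m)
  then have n: "n - m = Suc (n - Suc m)" by simp
  have "Z a b (n - m) = Z a b (n - Suc m) * (a + b + real (n - Suc m) * a * b)"
    unfolding n Z_eq_prod by simp
  moreover have "(\<Prod>i<Suc m. a + b + real (n - Suc m + i) * a * b)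
     = (a + b + real (n - Suc m) * a * b) * (\<Prod>i<m. a + b + real (n - m + i) * a * b)"
    unfolding prod.lessThan_Suc_shift using n by (simp add: add.commute add.left_commute)
  ultimately show ?case using Suc by (simp add: mult.assoc)
qed simp

text \<open>Summing \<open>filled_weight\<close> over the \<open>m\<close>-subsets of the second diagonal shows that this is the
  expectation of \<open>X n choose m\<close>.\<close>
definition binomial_moment :: "nat \<Rightarrow> nat \<Rightarrow> real" where
  "binomial_moment n m = real ((n - m) choose m) * (a * b) ^ m * Z a b (n - m) / Z a b n"

definition moment_factor :: "nat \<Rightarrow> nat \<Rightarrow> nat \<Rightarrow> real" where
  "moment_factor n m i = (real (n - m) - real i) * (a * b) / (a + b + real (n - m + i) * a * b)"

lemma binomial_moment_eq_prod:
  assumes "m \<le> n"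
  shows "binomial_moment n m = (\<Prod>i<m. moment_factor n m i) / fact m"
proof -
  have "real ((n - m) choose m) = (\<Prod>i<m. real (n - m) - real i) / fact m"
    using gbinomial_mult_fact'[of "real (n - m)" m]
    by (simp add: binomial_gbinomial atLeast0LessThan field_simps)
  moreover have "(\<Prod>i<m. moment_factor n m i) =
      (\<Prod>i<m. real (n - m) - real i) * (a * b) ^ m / (\<Prod>i<m. a + b + real (n - m + i) * a * b)"
    unfolding moment_factor_def prod_dividef prod.distrib by (simp add: power_mult_distrib)
  moreover have "0 < (\<Prod>i<m. a + b + real (n - m + i) * a * b)"
    by (rule prod_pos) (rule Z_factor_pos)
  moreover have "0 < Z a b (n - m)" by (rule Z_pos)
  ultimately show ?thesis
    unfolding binomial_moment_def Z_split[OF assms] by simp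
qed

lemma binomial_moment_nonneg: "0 \<le> binomial_moment n m"
  unfolding binomial_moment_def using Z_pos[of "n - m"] Z_pos[of n] a_pos b_pos
  by (intro divide_nonneg_pos mult_nonneg_nonneg) auto

lemma binomial_moment_eq_0: "n < m \<Longrightarrow> binomial_moment n m = 0"
  by (simp add: binomial_moment_def)

lemma binomial_moment_le: "binomial_moment n m \<le> 1 / fact m"
proof (cases "2 * m \<le> n")
  case True
  have "0 \<le> moment_factor n m i \<and> moment_factor n m i \<le> 1" if "i < m" for i
  proof
    have num: "0 \<le> real (n - m) - real i" using that True by simp
    have den: "0 < a + b + real (n - m + i) * a * b" by (rule Z_factor_pos)
    show "0 \<le> moment_factor n m i"
      unfolding moment_factor_def using num den a_pos b_pos by simp
    have "(real (n - m) - real i) * (a * b) \<le> a + b + real (n - m + i) * a * b"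
      using a_pos b_pos by (simp add: algebra_simps)
    then show "moment_factor n m i \<le> 1"
      unfolding moment_factor_def pos_divide_le_eq[OF den] by simp
  qed
  then have "(\<Prod>i<m. moment_factor n m i) \<le> 1" by (intro prod_le_1) auto
  then show ?thesis using True by (simp add: binomial_moment_eq_prod divide_right_mono)
next
  case False
  then show ?thesis by (simp add: binomial_moment_def binomial_eq_0)
qed

lemma moment_factor_tendsto: "(\<lambda>n. moment_factor n m i) \<longlonglongrightarrow> 1"
proof (rule Lim_transform_eventually[OF tendsto_ratio_1])
  define K where "K = (a + b) / (a * b) - real m + real i"
  show "\<forall>\<^sub>F n in sequentially. (real n - real (m + i)) / (K + real n) = moment_factor n m i"
  proof (rule eventually_sequentiallyI[of m])
    fix n assume "m \<le> n"
    then show "(real n - real (m + i)) / (K + real n) = moment_factor n m i"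
      using a_pos b_pos by (simp add: moment_factor_def K_def field_simps)
  qed
qed

lemma binomial_moment_tendsto: "(\<lambda>n. binomial_moment n m) \<longlonglongrightarrow> 1 / fact m"
proof (rule Lim_transform_eventually)
  show "(\<lambda>n. (\<Prod>i<m. moment_factor n m i) / fact m) \<longlonglongrightarrow> 1 / fact m"
    using tendsto_prod[of "{..<m}" "\<lambda>i n. moment_factor n m i" "\<lambda>_. 1"]
    by (intro tendsto_divide) (auto intro: moment_factor_tendsto)
  show "\<forall>\<^sub>F n in sequentially. (\<Prod>i<m. moment_factor n m i) / fact m = binomial_moment n m"
    by (rule eventually_sequentiallyI[of m]) (simp add: binomial_moment_eq_prod)
qed

lemma wt_pos: "0 < wt a b T"
  using a_pos b_pos by (simp add: wt_def)

lemma pmf_staircase_pmf: "pmf (staircase_pmf n a b) T = (if T \<in> staircase n then wt a b T / Z a b n else 0)"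
proof -
  define f where "f T = (if T \<in> staircase n then wt a b T / Z a b n else 0)" for T
  have nonneg: "0 \<le> f T" for T using wt_pos Z_pos by (simp add: f_def less_imp_le)
  have "(\<integral>\<^sup>+T. ennreal (f T) \<partial>count_space UNIV) = (\<Sum>T\<in>staircase n. ennreal (f T))"
    by (rule nn_integral_count_space') (auto simp: finite_staircase f_def)
  also have "\<dots> = ennreal (\<Sum>T\<in>staircase n. f T)" using nonneg by simp
  also have "(\<Sum>T\<in>staircase n. f T) = 1"
    using Z_pos[of n] by (simp add: f_def Z_def sum_divide_distrib[symmetric])
  finally have "pmf (embed_pmf f) T = f T" using nonneg by (intro pmf_embed_pmf) auto
  moreover have "staircase_pmf n a b = embed_pmf f" unfolding staircase_pmf_def f_def Z_def ..
  ultimately show ?thesis by (simp add: f_def)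
qed

lemma measure_staircase_pmf:
  "measure_pmf.prob (staircase_pmf n a b) A = (\<Sum>T\<in>A \<inter> staircase n. wt a b T) / Z a b n"
proof -
  have "wt a b T \<noteq> 0" "Z a b n \<noteq> 0" for T using wt_pos[of T] Z_pos[of n] by auto
  then have "set_pmf (staircase_pmf n a b) = staircase n"
    by (auto simp: set_pmf_eq pmf_staircase_pmf)
  then have "measure_pmf.prob (staircase_pmf n a b) A = measure_pmf.prob (staircase_pmf n a b) (A \<inter> staircase n)"
    using measure_Int_set_pmf[of "staircase_pmf n a b" A] by simp
  also have "\<dots> = (\<Sum>T\<in>A \<inter> staircase n. wt a b T / Z a b n)"
    by (simp add: measure_measure_pmf_finite finite_staircase pmf_staircase_pmf)
  finally show ?thesis by (simp add: sum_divide_distrib)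
qed

lemma prob_X_eq:
  assumes "1 \<le> n"
  shows "measure_pmf.prob (staircase_pmf n a b) (X n -` {k}) =
    (\<Sum>m\<le>n. (-1) ^ (m + k) * real (m choose k) * binomial_moment n m)"
proof -
  have "X n -` {k} \<inter> staircase n = {T \<in> staircase n. X n T = k}" by auto
  moreover have "card (no_adjacent_subsets (n - 1) m) = (n - m) choose m" for m
    using assms by (simp add: card_no_adjacent_subsets)
  ultimately show ?thesis
    by (simp add: measure_staircase_pmf sum_wt_X_eq sum_divide_distrib binomial_moment_def mult.assoc)
qed

lemma prob_X_tendsto:
  "(\<lambda>n. measure_pmf.prob (staircase_pmf n a b) (X n -` {k})) \<longlonglongrightarrow> exp (-1) / fact k"
proof (rule Lim_transform_eventually)
  show "(\<lambda>n. \<Sum>m\<le>n. (-1) ^ (m + k) * real (m choose k) * binomial_moment n m) \<longlonglongrightarrow> exp (-1) / fact k"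
    by (intro alternating_binomial_moments_tendsto binomial_moment_tendsto)
      (simp_all add: binomial_moment_nonneg binomial_moment_le binomial_moment_eq_0)
  show "\<forall>\<^sub>F n in sequentially. (\<Sum>m\<le>n. (-1) ^ (m + k) * real (m choose k) * binomial_moment n m) =
      measure_pmf.prob (staircase_pmf n a b) (X n -` {k})"
    by (rule eventually_sequentiallyI[of 1]) (simp add: prob_X_eq)
qed

end

theorem theorem3p9:
  fixes \<alpha> \<beta> :: real
  assumes "\<alpha> > 0" and "\<beta> > 0"
  shows "weak_conv_m (\<lambda>n. X_law n \<alpha> \<beta>)
           (distr (measure_pmf (poisson_pmf 1)) borel (\<lambda>k. real k))"
  unfolding weak_conv_m_def weak_conv_def
proof (intro allI impI)
  fix x :: real
  interpret positive_weights \<alpha> \<beta> using assms by unfold_locales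
  have "(\<lambda>n. \<Sum>k\<in>{k. real k \<le> x}. measure_pmf.prob (staircase_pmf n \<alpha> \<beta>) (X n -` {k}))
     \<longlonglongrightarrow> (\<Sum>k\<in>{k. real k \<le> x}. pmf (poisson_pmf 1) k)"
    by (intro tendsto_sum) (simp add: prob_X_tendsto)
  then show "(\<lambda>n. cdf (X_law n \<alpha> \<beta>) x) \<longlonglongrightarrow> cdf (distr (measure_pmf (poisson_pmf 1)) borel real) x"
    using cdf_distr_nat[where f = "\<lambda>k. k" and p = "poisson_pmf 1"]
    by (simp add: X_law_def cdf_distr_nat measure_pmf_single)
qed

end
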